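(* Let $\mathcal M\subset \mathcal M_n(\mathbb R)$ be a compact convex set of irreducible Metzler matrices. Then $\lambda(\mathcal M)\ge\lambda(m)$ for every $m\in\mathcal M$, where $\lambda(m)$ is the Perron (dominant) eigenvalue of $m$.
   Context: A matrix is Metzler if its off-diagonal entries are nonnegative; it is irreducible if for every partition $\{1,\dots,n\}=I\sqcup J$ into nonempty sets some $m_{ij}$ with $i\in I$, $j\in J$ is positive. $K$ is the nonnegative orthant, $K_0=K\setminus\{0\}$. For $t>0$, $L^\infty(0,t)$ is the set of measurable controls $M:[0,t]\to\mathcal M$ and $x_M$ solves $\dot x_M=M(s)x_M$, $x_M(0)=x$. $\lambda(\mathcal M)$ is the unique real number for which there exists $\overline v:K\to\mathbb R_+$, homogeneous of degree 1, positive on $K_0$, globally Lipschitz, with $e^{\lambda(\mathcal M)t}\overline v(x)=\sup_{M\in L^\infty(0,t)}\overline v(x_M(t))$ for all $t\ge0$, $x\in K$. *)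

theory Defs
  imports "HOL-Analysis.Analysis"
begin

definition metzler :: "real^'n^'n \<Rightarrow> bool" where
  "metzler m \<longleftrightarrow> (\<forall>i j. i \<noteq> j \<longrightarrow> 0 \<le> m $ i $ j)"

definition irreducible_mat :: "real^'n^'n \<Rightarrow> bool" where
  "irreducible_mat m \<longleftrightarrow>
     (\<forall>I J. I \<noteq> {} \<longrightarrow> J \<noteq> {} \<longrightarrow> I \<inter> J = {} \<longrightarrow> I \<union> J = UNIV \<longrightarrow>
        (\<exists>i\<in>I. \<exists>j\<in>J. 0 < m $ i $ j))"

definition orthant :: "(real^'n) set" where
  "orthant = {x. \<forall>i. 0 \<le> x $ i}"

definition cmat :: "real^'n^'n \<Rightarrow> complex^'n^'n" where
  "cmat m = (\<chi> i j. complex_of_real (m $ i $ j))"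

definition is_eigenvalue :: "real^'n^'n \<Rightarrow> complex \<Rightarrow> bool" where
  "is_eigenvalue m \<mu> \<longleftrightarrow> (\<exists>v::complex^'n. v \<noteq> 0 \<and> cmat m *v v = \<mu> *s v)"

definition perron_root :: "real^'n^'n \<Rightarrow> real" where
  "perron_root m = (THE r. is_eigenvalue m (complex_of_real r) \<and>
                           (\<forall>\<mu>. is_eigenvalue m \<mu> \<longrightarrow> Re \<mu> \<le> r))"

text \<open>Admissible pair (control, trajectory) on [0,t]: a measurable control with values
  in Ms, and an (absolutely continuous, Caratheodory) solution of
  x' = M(s) x, x(0) = x0, written in integral form.\<close>
definition admissible ::
  "(real^'n^'n) set \<Rightarrow> real \<Rightarrow> real^'n \<Rightarrow> (real \<Rightarrow> real^'n^'n) \<Rightarrow> (real \<Rightarrow> real^'n) \<Rightarrow> bool" where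
  "admissible Ms t x0 M y \<longleftrightarrow>
     M measurable_on {0..t} \<and> (\<forall>s\<in>{0..t}. M s \<in> Ms) \<and>
     continuous_on {0..t} y \<and>
     (\<forall>s\<in>{0..t}. ((\<lambda>\<tau>. M \<tau> *v y \<tau>) has_integral (y s - x0)) {0..s})"

definition lambda_witness :: "(real^'n^'n) set \<Rightarrow> real \<Rightarrow> (real^'n \<Rightarrow> real) \<Rightarrow> bool" where
  "lambda_witness Ms l v \<longleftrightarrow>
     (\<forall>x\<in>orthant. 0 \<le> v x) \<and>
     (\<forall>x\<in>orthant. \<forall>c\<ge>0. v (c *\<^sub>R x) = c * v x) \<and>
     (\<forall>x\<in>orthant - {0}. 0 < v x) \<and>
     (\<exists>L. \<forall>x\<in>orthant. \<forall>y\<in>orthant. \<bar>v x - v y\<bar> \<le> L * norm (x - y)) \<and>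
     (\<forall>t\<ge>0. \<forall>x\<in>orthant.
        exp (l * t) * v x = (SUP p \<in> {(M, y). admissible Ms t x M y}. v (snd p t)))"

definition has_lambda :: "(real^'n^'n) set \<Rightarrow> real \<Rightarrow> bool" where
  "has_lambda Ms l \<longleftrightarrow> (\<exists>v. lambda_witness Ms l v)"

end

theory Submission
  imports Defs
begin

text \<open>Adding \<open>c I\<close> to a Metzler matrix \<open>m\<close> makes it entrywise nonnegative, so Brouwer's
  theorem on the simplex gives a nonnegative eigenvector \<open>x\<close>, and irreducibility forces
  \<open>x > 0\<close>.  Comparing an arbitrary complex eigenvector with \<open>x\<close> at a coordinate maximising
  \<open>\<bar>z\<^sub>j\<bar> / x\<^sub>j\<close> shows that the eigenvalue \<open>r\<close> of \<open>x\<close> is the Perron root.  The constant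
  control \<open>m\<close> has the admissible trajectory \<open>e\<^sup>r\<^sup>t x\<close>, hence
  \<open>e\<^sup>r\<^sup>t v(x) = v(e\<^sup>r\<^sup>t x) \<le> e\<^sup>\<lambda>\<^sup>t v(x)\<close> with \<open>v(x) > 0\<close>, i.e. \<open>r \<le> \<lambda>\<close>.\<close>

lemma matrix_shift_nth:
  "(m + c *\<^sub>R mat 1 :: real^'n^'n) $ i $ j = m $ i $ j + (if i = j then c else 0)"
  by (simp add: mat_def)

lemma matrix_shift_mult_vector:
  "(m + c *\<^sub>R mat 1 :: real^'n^'n) *v x = m *v x + c *\<^sub>R x"
  by (simp add: matrix_vector_mult_add_rdistrib scaleR_matrix_vector_assoc[symmetric])

lemma metzler_nonneg_shift:
  fixes m :: "real^'n^'n"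
  assumes "metzler m"
  obtains c where "\<And>i j. 0 \<le> (m + c *\<^sub>R mat 1) $ i $ j"
proof
  define c where "c = (\<Sum>i\<in>UNIV. \<bar>m $ i $ i\<bar>)"
  fix i j
  show "0 \<le> (m + c *\<^sub>R mat 1) $ i $ j"
  proof (cases "i = j")
    case True
    have "\<bar>m $ i $ i\<bar> \<le> c"
      unfolding c_def by (rule member_le_sum) auto
    then have "0 \<le> m $ i $ i + c"
      by (simp add: abs_le_iff)
    with True show ?thesis
      unfolding matrix_shift_nth by simp
  next
    case False
    then have "0 \<le> m $ i $ j"
      using assms unfolding metzler_def by blast
    with False show ?thesis
      unfolding matrix_shift_nth by simp
  qed
qed

lemma is_eigenvalue_shift:
  fixes m :: "real^'n^'n"
  assumes "is_eigenvalue m \<mu>"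
  shows "is_eigenvalue (m + c *\<^sub>R mat 1) (\<mu> + complex_of_real c)"
proof -
  obtain z where "z \<noteq> 0" and z: "cmat m *v z = \<mu> *s z"
    using assms unfolding is_eigenvalue_def by blast
  have "(cmat (m + c *\<^sub>R mat 1) *v z) $ i = (cmat m *v z) $ i + complex_of_real c * z $ i" for i
  proof -
    have "(cmat (m + c *\<^sub>R mat 1) *v z) $ i
        = (\<Sum>j\<in>UNIV. complex_of_real (m $ i $ j) * z $ j
                    + (if i = j then complex_of_real c * z $ j else 0))"
      by (auto simp: matrix_vector_mult_def cmat_def mat_def distrib_right intro!: sum.cong)
    then show ?thesis
      by (simp add: sum.distrib matrix_vector_mult_def cmat_def)
  qed
  then have "cmat (m + c *\<^sub>R mat 1) *v z = cmat m *v z + complex_of_real c *s z"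
    by (simp add: vec_eq_iff)
  also have "\<dots> = (\<mu> + complex_of_real c) *s z"
    by (simp add: z vector_sadd_rdistrib)
  finally show ?thesis
    using \<open>z \<noteq> 0\<close> unfolding is_eigenvalue_def by blast
qed

lemma is_eigenvalue_of_real:
  fixes m :: "real^'n^'n"
  assumes "x \<noteq> 0" and "m *v x = r *s x"
  shows "is_eigenvalue m (complex_of_real r)"
  unfolding is_eigenvalue_def
proof (intro exI conjI)
  let ?w = "\<chi> i. complex_of_real (x $ i)"
  show "?w \<noteq> 0"
    using assms(1) by (simp add: vec_eq_iff)
  have "(\<Sum>j\<in>UNIV. m $ i $ j * x $ j) = r * x $ i" for i
    using arg_cong[OF assms(2), of "\<lambda>v. v $ i"] by (simp add: matrix_vector_mult_def)
  then show "cmat m *v ?w = complex_of_real r *s ?w"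
    by (simp add: vec_eq_iff cmat_def matrix_vector_mult_def flip: of_real_mult of_real_sum)
qed

lemma nonneg_matrix_eigenvalue_norm_le:
  fixes A :: "real^'n^'n"
  assumes nonneg: "\<And>i j. 0 \<le> A $ i $ j"
    and Ax: "A *v x = \<rho> *s x" and xpos: "\<And>i. 0 < x $ i"
    and "is_eigenvalue A \<mu>"
  shows "cmod \<mu> \<le> \<rho>"
proof -
  obtain z where "z \<noteq> 0" and z: "cmat A *v z = \<mu> *s z"
    using assms(4) unfolding is_eigenvalue_def by blast
  define q where "q j = cmod (z $ j) / x $ j" for j
  have "Max (range q) \<in> range q"
    by (rule Max_in) auto
  then obtain k where k: "Max (range q) = q k"
    by (rule rangeE)
  have qk: "q j \<le> q k" for j
    unfolding k[symmetric] by (rule Max_ge) auto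
  have zq: "cmod (z $ j) = q j * x $ j" for j
    using xpos[of j] unfolding q_def by simp
  obtain j0 where "z $ j0 \<noteq> 0"
    using \<open>z \<noteq> 0\<close> by (auto simp: vec_eq_iff)
  then have "0 < q j0"
    unfolding q_def using xpos[of j0] by simp
  then have zk_pos: "0 < cmod (z $ k)"
    using qk[of j0] xpos[of k] zq[of k] by simp
  have "cmod \<mu> * cmod (z $ k) = cmod (\<Sum>j\<in>UNIV. complex_of_real (A $ k $ j) * z $ j)"
    using arg_cong[OF z, of "\<lambda>v. v $ k"]
    by (simp add: matrix_vector_mult_def cmat_def norm_mult)
  also have "\<dots> \<le> (\<Sum>j\<in>UNIV. A $ k $ j * cmod (z $ j))"
    using norm_sum[of "\<lambda>j. complex_of_real (A $ k $ j) * z $ j" UNIV] nonneg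
    by (simp add: norm_mult)
  also have "\<dots> \<le> (\<Sum>j\<in>UNIV. A $ k $ j * (q k * x $ j))"
    using nonneg qk xpos by (intro sum_mono mult_left_mono) (simp_all add: zq mult_right_mono less_imp_le)
  also have "\<dots> = q k * (A *v x) $ k"
    by (simp add: matrix_vector_mult_def sum_distrib_left mult.left_commute)
  also have "\<dots> = \<rho> * cmod (z $ k)"
    using Ax zq[of k] by simp
  finally show ?thesis
    using zk_pos by simp
qed

lemma metzler_positive_eigenvector_dominates:
  fixes m :: "real^'n^'n"
  assumes "metzler m" and mx: "m *v x = r *s x" and xpos: "\<And>i. 0 < x $ i"
    and "is_eigenvalue m \<mu>"
  shows "Re \<mu> \<le> r"
proof -
  obtain c where "\<And>i j. 0 \<le> (m + c *\<^sub>R mat 1) $ i $ j"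
    using metzler_nonneg_shift[OF \<open>metzler m\<close>] by blast
  moreover have "(m + c *\<^sub>R mat 1) *v x = (r + c) *s x"
    unfolding matrix_shift_mult_vector mx by (simp add: scalar_mult_eq_scaleR algebra_simps)
  ultimately have "cmod (\<mu> + complex_of_real c) \<le> r + c"
    using nonneg_matrix_eigenvalue_norm_le xpos is_eigenvalue_shift[OF assms(4)] by blast
  then show ?thesis
    using complex_Re_le_cmod[of "\<mu> + complex_of_real c"] by simp
qed

lemma perron_root_eqI:
  fixes m :: "real^'n^'n"
  assumes "metzler m" and "m *v x = r *s x" and "\<And>i. 0 < x $ i"
  shows "perron_root m = r"
proof -
  have "x \<noteq> 0"
  proof
    assume "x = 0"
    then show False
      using assms(3)[of undefined] by simp
  qed
  then have eig: "is_eigenvalue m (complex_of_real r)"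
    using is_eigenvalue_of_real assms(2) by blast
  have dom: "\<forall>\<mu>. is_eigenvalue m \<mu> \<longrightarrow> Re \<mu> \<le> r"
    using metzler_positive_eigenvector_dominates assms by blast
  show ?thesis
    unfolding perron_root_def
  proof (rule the_equality)
    show "is_eigenvalue m (complex_of_real r) \<and> (\<forall>\<mu>. is_eigenvalue m \<mu> \<longrightarrow> Re \<mu> \<le> r)"
      using eig dom by blast
    fix r' assume "is_eigenvalue m (complex_of_real r') \<and> (\<forall>\<mu>. is_eigenvalue m \<mu> \<longrightarrow> Re \<mu> \<le> r')"
    then have "r \<le> r'" and "r' \<le> r"
      using eig dom by (metis Re_complex_of_real)+
    then show "r' = r"
      by simp
  qed
qed

definition simplex_cart :: "(real^'n) set" where
  "simplex_cart = {x. (\<forall>i. 0 \<le> x $ i) \<and> (\<Sum>i\<in>UNIV. x $ i) = 1}"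

lemma compact_simplex_cart: "compact simplex_cart"
proof -
  have "closed (simplex_cart :: (real^'n) set)"
    unfolding simplex_cart_def
    by (intro closed_Collect_conj closed_Collect_all closed_Collect_le closed_Collect_eq
        continuous_intros)
  moreover have "norm x \<le> 1" if "x \<in> simplex_cart" for x :: "real^'n"
    using norm_le_l1_cart[of x] that by (simp add: simplex_cart_def)
  then have "bounded (simplex_cart :: (real^'n) set)"
    unfolding bounded_iff by blast
  ultimately show ?thesis
    by (simp add: compact_eq_bounded_closed)
qed

lemma convex_simplex_cart: "convex simplex_cart"
  unfolding convex_def simplex_cart_def
  by (auto simp: sum.distrib sum_distrib_left[symmetric])

lemma simplex_cart_nonempty: "simplex_cart \<noteq> {}"
proof -
  have "(\<chi> i. 1 / real CARD('n)) \<in> (simplex_cart :: (real^'n) set)"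
    unfolding simplex_cart_def by simp
  then show ?thesis
    by blast
qed

text \<open>Brouwer's fixed point theorem for \<open>x \<mapsto> Bx / \<Sum>\<^sub>i (Bx)\<^sub>i\<close> on the simplex, with
  \<open>B = A + I\<close> so that the normalising sum is at least \<open>1\<close>.\<close>
lemma nonneg_matrix_has_simplex_eigenvector:
  fixes A :: "real^'n^'n"
  assumes nonneg: "\<And>i j. 0 \<le> A $ i $ j"
  obtains x \<rho> where "x \<in> simplex_cart" and "A *v x = \<rho> *s x"
proof -
  define B where "B = A + 1 *\<^sub>R mat 1"
  define s where "s x = (\<Sum>i\<in>UNIV. (B *v x) $ i)" for x
  define f where "f x = (1 / s x) *\<^sub>R (B *v x)" for x
  have B_ge: "x $ i \<le> (B *v x) $ i" if "\<forall>i. 0 \<le> x $ i" for x i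
  proof -
    have "0 \<le> (A *v x) $ i"
      using nonneg that by (simp add: matrix_vector_mult_def sum_nonneg)
    then show ?thesis
      unfolding B_def matrix_shift_mult_vector by simp
  qed
  have s_ge: "1 \<le> s x" if "x \<in> simplex_cart" for x
    using that sum_mono[of UNIV "\<lambda>i. x $ i" "\<lambda>i. (B *v x) $ i"] B_ge
    unfolding simplex_cart_def s_def by auto
  have "continuous_on simplex_cart f"
    unfolding f_def s_def using s_ge unfolding s_def
    by (intro continuous_intros) (metis not_one_le_zero)+
  moreover have "f \<in> simplex_cart \<rightarrow> simplex_cart"
  proof
    fix x :: "real^'n" assume x: "x \<in> simplex_cart"
    have nonneg_x: "\<forall>i. 0 \<le> x $ i"
      using x unfolding simplex_cart_def by simp
    have "0 \<le> (B *v x) $ i" for i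
      using B_ge[OF nonneg_x, of i] nonneg_x by (meson order_trans)
    then have "0 \<le> f x $ i" for i
      using s_ge[OF x] unfolding f_def by simp
    moreover have "(\<Sum>i\<in>UNIV. f x $ i) = 1"
      using s_ge[OF x] unfolding f_def s_def by (simp flip: sum_divide_distrib)
    ultimately show "f x \<in> simplex_cart"
      unfolding simplex_cart_def by simp
  qed
  ultimately obtain x where x: "x \<in> simplex_cart" and "f x = x"
    using brouwer[OF compact_simplex_cart convex_simplex_cart simplex_cart_nonempty] by blast
  moreover have "B *v x = s x *\<^sub>R f x"
    using s_ge[OF x] unfolding f_def by simp
  ultimately have "B *v x = s x *\<^sub>R x"
    by simp
  then have "A *v x = (s x - 1) *s x"
    unfolding B_def matrix_shift_mult_vector by (simp add: scalar_mult_eq_scaleR algebra_simps)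
  with x show ?thesis
    using that by blast
qed

lemma metzler_has_simplex_eigenvector:
  fixes m :: "real^'n^'n"
  assumes "metzler m"
  obtains x r where "x \<in> simplex_cart" and "m *v x = r *s x"
proof -
  obtain c where "\<And>i j. 0 \<le> (m + c *\<^sub>R mat 1) $ i $ j"
    using metzler_nonneg_shift[OF \<open>metzler m\<close>] by blast
  then obtain x \<rho> where "x \<in> simplex_cart" and "(m + c *\<^sub>R mat 1) *v x = \<rho> *s x"
    using nonneg_matrix_has_simplex_eigenvector by blast
  moreover from this(2) have "m *v x = (\<rho> - c) *s x"
    unfolding matrix_shift_mult_vector by (simp add: scalar_mult_eq_scaleR algebra_simps)
  ultimately show ?thesis
    using that by blast
qed

text \<open>A zero coordinate \<open>a\<close> and a nonzero coordinate \<open>b\<close> with \<open>m\<^sub>a\<^sub>b > 0\<close> would give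
  \<open>0 = r x\<^sub>a = (m x)\<^sub>a \<ge> m\<^sub>a\<^sub>b x\<^sub>b > 0\<close>.\<close>
lemma irreducible_metzler_nonneg_eigenvector_pos:
  fixes m :: "real^'n^'n"
  assumes "metzler m" and "irreducible_mat m"
    and nonneg: "\<And>i. 0 \<le> x $ i" and "x \<noteq> 0" and mx: "m *v x = r *s x"
  shows "0 < x $ i"
proof (rule ccontr)
  define I where "I = {i. x $ i = 0}"
  define J where "J = {i. x $ i \<noteq> 0}"
  assume "\<not> 0 < x $ i"
  then have "I \<noteq> {}"
    using nonneg[of i] unfolding I_def by force
  moreover have "J \<noteq> {}"
    using \<open>x \<noteq> 0\<close> unfolding J_def by (auto simp: vec_eq_iff)
  moreover have "I \<inter> J = {}" and "I \<union> J = UNIV"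
    unfolding I_def J_def by auto
  ultimately obtain a b where "a \<in> I" and "b \<in> J" and "0 < m $ a $ b"
    using \<open>irreducible_mat m\<close> unfolding irreducible_mat_def by meson
  then have a: "x $ a = 0" and b: "0 < x $ b" and "a \<noteq> b"
    using nonneg[of b] unfolding I_def J_def by auto
  then have "0 < m $ a $ b * x $ b"
    using \<open>0 < m $ a $ b\<close> by simp
  also have "\<dots> \<le> (\<Sum>j\<in>UNIV. m $ a $ j * x $ j)"
  proof (rule member_le_sum)
    show "0 \<le> m $ a $ j * x $ j" if "j \<in> UNIV - {b}" for j
      using \<open>metzler m\<close>[unfolded metzler_def, rule_format, of a j] nonneg[of j] a
      by (cases "j = a") simp_all
  qed simp_all
  also have "\<dots> = r * x $ a"
    using arg_cong[OF mx, of "\<lambda>v. v $ a"] by (simp add: matrix_vector_mult_def)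
  finally show False
    using a by simp
qed

lemma irreducible_metzler_positive_eigenvector:
  fixes m :: "real^'n^'n"
  assumes "metzler m" and "irreducible_mat m"
  obtains x r where "\<And>i. 0 < x $ i" and "m *v x = r *s x"
proof -
  obtain x r where x: "x \<in> simplex_cart" and mx: "m *v x = r *s x"
    using metzler_has_simplex_eigenvector[OF assms(1)] by blast
  have nonneg: "0 \<le> x $ i" for i
    using x unfolding simplex_cart_def by simp
  have "x \<noteq> 0"
    using x unfolding simplex_cart_def by auto
  have "0 < x $ i" for i
    by (rule irreducible_metzler_nonneg_eigenvector_pos[OF assms nonneg \<open>x \<noteq> 0\<close> mx])
  then show ?thesis
    by (rule that[OF _ mx])
qed

lemma compact_matrix_set_operator_bound:
  fixes Ms :: "(real^'n^'m) set"
  assumes "compact Ms"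
  obtains B where "0 < B" and "\<And>a y. a \<in> Ms \<Longrightarrow> norm (a *v y) \<le> B * norm y"
proof -
  obtain B0 where B0: "\<And>a. a \<in> Ms \<Longrightarrow> norm a \<le> B0"
    using compact_imp_bounded[OF assms] by (auto simp: bounded_iff)
  define B where "B = real CARD('m) * real CARD('n) * \<bar>B0\<bar> + 1"
  have "norm (a *v y) \<le> B * norm y" if "a \<in> Ms" for a y
  proof -
    have "\<bar>a $ i $ j\<bar> \<le> \<bar>B0\<bar>" for i j
      using component_le_norm_cart[of "a $ i" j] Finite_Cartesian_Product.norm_nth_le[of a i] B0[OF that] by linarith
    then have "onorm ((*v) a) \<le> real CARD('m) * real CARD('n) * \<bar>B0\<bar>"
      by (rule onorm_le_matrix_component)
    then have "onorm ((*v) a) * norm y \<le> B * norm y"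
      unfolding B_def by (intro mult_right_mono) auto
    then show ?thesis
      using onorm[OF matrix_vector_mul_bounded_linear, of a y] by linarith
  qed
  moreover have "0 < B"
    unfolding B_def by (simp add: add_nonneg_pos)
  ultimately show ?thesis
    using that by blast
qed

lemma admissible_eigenvector_trajectory:
  fixes m :: "real^'n^'n"
  assumes "m \<in> Ms" and "m *v x = r *s x"
  shows "admissible Ms t x (\<lambda>_. m) (\<lambda>s. exp (r * s) *\<^sub>R x)"
  unfolding admissible_def
proof (intro conjI ballI)
  show "(\<lambda>_. m) measurable_on {0..t}" and "m \<in> Ms"
    using assms(1) by simp_all
  show "continuous_on {0..t} (\<lambda>s. exp (r * s) *\<^sub>R x)"
    by (intro continuous_intros)
  fix s assume s: "s \<in> {0..t}"
  have "((\<lambda>\<tau>. (r * exp (r * \<tau>)) *\<^sub>R x) has_integral (exp (r * s) *\<^sub>R x - exp (r * 0) *\<^sub>R x)) {0..s}"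
  proof (rule fundamental_theorem_of_calculus)
    show "0 \<le> s"
      using s by simp
    show "((\<lambda>\<tau>. exp (r * \<tau>) *\<^sub>R x) has_vector_derivative (r * exp (r * \<tau>)) *\<^sub>R x)
        (at \<tau> within {0..s})" for \<tau>
      by (auto intro!: derivative_eq_intros simp: has_vector_derivative_def)
  qed
  then show "((\<lambda>\<tau>. m *v (exp (r * \<tau>) *\<^sub>R x)) has_integral (exp (r * s) *\<^sub>R x - x)) {0..s}"
    using assms(2) by (simp add: matrix_vector_mult_scaleR scalar_mult_eq_scaleR mult.commute)
qed

lemma admissible_displacement_le:
  assumes adm: "admissible Ms t x M y" and s: "s \<in> {0..t}"
    and B: "\<And>a z. a \<in> Ms \<Longrightarrow> norm (a *v z) \<le> B * norm z" and "0 \<le> B"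
    and R: "\<And>\<tau>. \<tau> \<in> {0..t} \<Longrightarrow> norm (y \<tau>) \<le> R" and "0 \<le> R"
  shows "norm (y s - x) \<le> B * R * s"
proof -
  have "((\<lambda>\<tau>. M \<tau> *v y \<tau>) has_integral (y s - x)) (cbox 0 s)"
    using adm s unfolding admissible_def by simp
  moreover have "norm (M \<tau> *v y \<tau>) \<le> B * R" if "\<tau> \<in> cbox 0 s" for \<tau>
  proof -
    have \<tau>: "\<tau> \<in> {0..t}"
      using that s by auto
    then have "M \<tau> \<in> Ms"
      using adm unfolding admissible_def by blast
    then have "norm (M \<tau> *v y \<tau>) \<le> B * norm (y \<tau>)"
      by (rule B)
    also have "\<dots> \<le> B * R"
      using R[OF \<tau>] \<open>0 \<le> B\<close> by (rule mult_left_mono)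
    finally show ?thesis .
  qed
  ultimately have "norm (y s - x) \<le> B * R * Henstock_Kurzweil_Integration.content (cbox 0 s)"
    using \<open>0 \<le> B\<close> \<open>0 \<le> R\<close> by (intro has_integral_bound) simp_all
  then show ?thesis
    using s by simp
qed

text \<open>With \<open>R\<close> the maximum of \<open>\<bar>y\<bar>\<close> on \<open>[0,t]\<close>, the integral equation gives
  \<open>R \<le> \<bar>x\<bar> + tBR \<le> \<bar>x\<bar> + R/2\<close>.\<close>
lemma admissible_displacement_short_time:
  assumes adm: "admissible Ms t x M y" and "0 \<le> t" and "t * B \<le> 1/2"
    and B: "\<And>a z. a \<in> Ms \<Longrightarrow> norm (a *v z) \<le> B * norm z" and "0 \<le> B"
  shows "norm (y t - x) \<le> 2 * t * B * norm x"
proof -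
  have "continuous_on {0..t} (\<lambda>s. norm (y s))"
    using adm unfolding admissible_def by (intro continuous_intros) simp
  then obtain s0 where s0: "s0 \<in> {0..t}" and max: "\<And>s. s \<in> {0..t} \<Longrightarrow> norm (y s) \<le> norm (y s0)"
    using continuous_attains_sup[of "{0..t}" "\<lambda>s. norm (y s)"] \<open>0 \<le> t\<close> by auto
  define R where "R = norm (y s0)"
  have disp: "norm (y s - x) \<le> B * R * s" if "s \<in> {0..t}" for s
    using admissible_displacement_le[OF adm that B \<open>0 \<le> B\<close> max norm_ge_zero] unfolding R_def .
  have "s0 * B \<le> 1/2"
    using s0 \<open>t * B \<le> 1/2\<close> \<open>0 \<le> B\<close> by (meson atLeastAtMost_iff mult_right_mono order_trans)
  then have "R * (s0 * B) \<le> R * (1/2)"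
    unfolding R_def by (intro mult_left_mono) auto
  then have "B * R * s0 \<le> R / 2"
    by (simp add: algebra_simps)
  then have "R \<le> 2 * norm x"
    using disp[OF s0] norm_triangle_ineq2[of "y s0" x] unfolding R_def by linarith
  then have "B * R * t \<le> B * (2 * norm x) * t"
    using \<open>0 \<le> B\<close> \<open>0 \<le> t\<close> by (intro mult_right_mono mult_left_mono)
  then have "norm (y t - x) \<le> B * (2 * norm x) * t"
    using disp[of t] \<open>0 \<le> t\<close> by simp
  then show ?thesis
    by (simp add: mult_ac)
qed

lemma admissible_endpoint_near:
  fixes Ms :: "(real^'n^'n) set"
  assumes "compact Ms" and "0 < \<epsilon>"
  obtains t where "0 < t" and "\<And>M y. admissible Ms t x M y \<Longrightarrow> norm (y t - x) < \<epsilon>"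
proof -
  obtain B where "0 < B" and B: "\<And>a z. a \<in> Ms \<Longrightarrow> norm (a *v z) \<le> B * norm z"
    using compact_matrix_set_operator_bound[OF assms(1)] by blast
  define t where "t = min (1 / (2 * B)) (\<epsilon> / (4 * B * (norm x + 1)))"
  have "0 < t"
    unfolding t_def using \<open>0 < B\<close> \<open>0 < \<epsilon>\<close> by (simp add: add_nonneg_pos)
  have "t * B \<le> 1/2"
    using \<open>0 < B\<close> mult_right_mono[of t "1 / (2 * B)" B] unfolding t_def by fastforce
  have "0 < 4 * B * (norm x + 1)"
    using \<open>0 < B\<close> by (simp add: add_nonneg_pos)
  moreover have "t \<le> \<epsilon> / (4 * B * (norm x + 1))"
    unfolding t_def by simp
  ultimately have "t * (4 * B * (norm x + 1)) \<le> \<epsilon>"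
    by (simp add: pos_le_divide_eq)
  moreover have "2 * t * B * norm x \<le> 2 * t * B * (norm x + 1)"
    using \<open>0 < t\<close> \<open>0 < B\<close> by (intro mult_left_mono) auto
  ultimately have "2 * t * B * norm x < \<epsilon>"
    using \<open>0 < \<epsilon>\<close> by (simp add: algebra_simps)
  moreover have "norm (y t - x) \<le> 2 * t * B * norm x" if "admissible Ms t x M y" for M y
    using admissible_displacement_short_time[OF that _ \<open>t * B \<le> 1/2\<close> B] \<open>0 < t\<close> \<open>0 < B\<close> by simp
  ultimately show ?thesis
    using that \<open>0 < t\<close> by fastforce
qed

lemma positive_vector_in_interior_orthant:
  fixes x :: "real^'n"
  assumes "\<And>i. 0 < x $ i"
  shows "x \<in> interior orthant"
proof (rule interiorI)
  have "{y :: real^'n. \<forall>i. 0 < y $ i} = (\<Inter>i. {y. 0 < y $ i})"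
    by auto
  then show "open {y :: real^'n. \<forall>i. 0 < y $ i}"
    by (auto intro!: open_INT open_Collect_less continuous_intros)
  show "{y :: real^'n. \<forall>i. 0 < y $ i} \<subseteq> orthant"
    unfolding orthant_def by (auto intro: less_imp_le)
  show "x \<in> {y. \<forall>i. 0 < y $ i}"
    using assms by simp
qed

text \<open>The supremum in \<open>lambda_witness\<close> is only meaningful once it is bounded above: for
  small \<open>t\<close> every trajectory ends in a ball around \<open>x\<close> inside the orthant, where \<open>v\<close> is
  Lipschitz.\<close>
lemma lambda_witness_ge_positive_eigenvalue:
  fixes Ms :: "(real^'n^'n) set"
  assumes v: "lambda_witness Ms l v" and "compact Ms" and "m \<in> Ms"
    and mx: "m *v x = r *s x" and xpos: "\<And>i. 0 < x $ i"
  shows "r \<le> l"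
proof -
  obtain \<epsilon> where "0 < \<epsilon>" and ball: "ball x \<epsilon> \<subseteq> orthant"
    using positive_vector_in_interior_orthant[OF xpos] by (meson mem_interior)
  obtain t where "0 < t" and near: "\<And>M y. admissible Ms t x M y \<Longrightarrow> norm (y t - x) < \<epsilon>"
    using admissible_endpoint_near[OF \<open>compact Ms\<close> \<open>0 < \<epsilon>\<close>] by blast
  obtain L where L: "\<And>a b. a \<in> orthant \<Longrightarrow> b \<in> orthant \<Longrightarrow> \<bar>v a - v b\<bar> \<le> L * norm (a - b)"
    using v unfolding lambda_witness_def by blast
  have x: "x \<in> orthant"
    using ball \<open>0 < \<epsilon>\<close> by auto
  have "x \<noteq> 0"
    using xpos[of undefined] by auto
  then have "0 < v x"
    using v x unfolding lambda_witness_def by blast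
  let ?A = "{(M, y). admissible Ms t x M y}"
  have "v (y t) \<le> v x + \<bar>L\<bar> * \<epsilon>" if "admissible Ms t x M y" for M y
  proof -
    have near_x: "norm (y t - x) < \<epsilon>"
      using near[OF that] .
    then have "y t \<in> orthant"
      using ball by (auto simp: dist_norm norm_minus_commute)
    then have "v (y t) - v x \<le> L * norm (y t - x)"
      using L[of "y t" x] x by (simp add: abs_le_iff)
    also have "\<dots> \<le> \<bar>L\<bar> * norm (y t - x)"
      by (intro mult_right_mono) simp_all
    also have "\<dots> \<le> \<bar>L\<bar> * \<epsilon>"
      using near_x by (intro mult_left_mono) simp_all
    finally show ?thesis
      by simp
  qed
  then have bdd: "bdd_above ((\<lambda>p. v (snd p t)) ` ?A)"
    by (intro bdd_aboveI2[of _ _ "v x + \<bar>L\<bar> * \<epsilon>"]) auto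
  have "(\<lambda>_. m, \<lambda>s. exp (r * s) *\<^sub>R x) \<in> ?A"
    using admissible_eigenvector_trajectory[OF \<open>m \<in> Ms\<close> mx] by simp
  then have "v (exp (r * t) *\<^sub>R x) \<le> (SUP p \<in> ?A. v (snd p t))"
    using cSUP_upper[OF _ bdd] by fastforce
  moreover have "v (exp (r * t) *\<^sub>R x) = exp (r * t) * v x"
    using v x unfolding lambda_witness_def by simp
  moreover have "(SUP p \<in> ?A. v (snd p t)) = exp (l * t) * v x"
    using v x \<open>0 < t\<close> unfolding lambda_witness_def by simp
  ultimately have "exp (r * t) \<le> exp (l * t)"
    using \<open>0 < v x\<close> by simp
  then show ?thesis
    using \<open>0 < t\<close> by simp
qed

theorem proposition1:
  fixes Ms :: "(real^'n^'n) set" and m :: "real^'n^'n" and l :: real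
  assumes "compact Ms" and "convex Ms"
    and "\<forall>a\<in>Ms. metzler a \<and> irreducible_mat a"
    and "m \<in> Ms"
    and "has_lambda Ms l"
  shows "perron_root m \<le> l"
proof -
  have "metzler m" and "irreducible_mat m"
    using assms(3,4) by blast+
  then obtain x r where xpos: "\<And>i. 0 < x $ i" and mx: "m *v x = r *s x"
    using irreducible_metzler_positive_eigenvector by blast
  obtain v where "lambda_witness Ms l v"
    using assms(5) unfolding has_lambda_def by blast
  then have "r \<le> l"
    using lambda_witness_ge_positive_eigenvalue assms(1,4) mx xpos by blast
  then show ?thesis
    using perron_root_eqI[OF \<open>metzler m\<close> mx xpos] by simp
qed

end
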